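(* Let $T$ be a non-periodic transformation of a Lebesgue probability space $(\Omega,\mathcal{B},\mu)$. Then there is a countable measurable partition of $\Omega$ whose pieces are labeled by the positive integers $\{1,2,3,\dots\}$ which generates $T$ and has the following property. Writing $h(\omega)$ for the label of the piece containing $\omega$: for almost every $\omega$, if $h(T^{-1}(\omega))=n$, then the values $h(T^{-n}(\omega)),h(T^{1-n}(\omega)),\dots,h(T^{-1}(\omega))$ determine $h(\omega)$; that is, for each $n\ge 1$ there is a function $F_n:\mathbb{N}^n\to\mathbb{N}$ such that $h(\omega)=F_n\big(h(T^{-n}(\omega)),\dots,h(T^{-1}(\omega))\big)$ for almost every $\omega$ with $h(T^{-1}(\omega))=n$.
   Context: A non-periodic transformation is a one-to-one measure preserving transformation $T$ of a Lebesgue probability space such that $\mu(\{\omega: T^i(\omega)=\omega \text{ for some } i\ge 1\})=0$. For a partition $P$, the $T,P$ name of $\omega$ is the doubly infinite sequence $(X_i)_{i\in\mathbb{Z}}$ where $X_i$ is the piece of $P$ containing $T^i(\omega)$. $P$ generates $T$ if the map $\omega\mapsto$ ($T,P$ name of $\omega$) separates points off a null set, i.e. there is a null set $Z$ such that distinct points outside $Z$ have distinct $T,P$ names. All statements are understood modulo null sets. *)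

theory Defs
  imports "HOL-Probability.Probability"
begin

text \<open>A Lebesgue probability space: the completion of a Borel probability
  measure on a Polish space (Rokhlin's definition, up to isomorphism mod 0).\<close>
definition lebesgue_prob_space :: "'a::polish_space measure \<Rightarrow> bool" where
  "lebesgue_prob_space M \<longleftrightarrow>
     (\<exists>N. sets N = sets borel \<and> prob_space N \<and> M = completion N)"

definition invertible_mpt :: "'a measure \<Rightarrow> ('a \<Rightarrow> 'a) \<Rightarrow> bool" where
  "invertible_mpt M T \<longleftrightarrow> bij T \<and> T \<in> measurable M M \<and> inv T \<in> measurable M M
     \<and> distr M M T = M"

definition tpow :: "('a \<Rightarrow> 'a) \<Rightarrow> int \<Rightarrow> 'a \<Rightarrow> 'a" where
  "tpow T i = (if 0 \<le> i then T ^^ nat i else inv T ^^ nat (- i))"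

definition non_periodic :: "'a measure \<Rightarrow> ('a \<Rightarrow> 'a) \<Rightarrow> bool" where
  "non_periodic M T \<longleftrightarrow> invertible_mpt M T \<and>
     {\<omega> \<in> space M. \<exists>i::nat. i \<ge> 1 \<and> (T ^^ i) \<omega> = \<omega>} \<in> null_sets M"

definition generates :: "'a measure \<Rightarrow> ('a \<Rightarrow> 'a) \<Rightarrow> ('a \<Rightarrow> nat) \<Rightarrow> bool" where
  "generates M T h \<longleftrightarrow> (\<exists>Z \<in> null_sets M. \<forall>x \<in> space M - Z. \<forall>y \<in> space M - Z.
     (\<forall>i::int. h (tpow T i x) = h (tpow T i y)) \<longrightarrow> x = y)"

end

theory Submission
  imports Defs
begin

text \<open>We build a hierarchy of markers \<open>A 0 \<supseteq> A 1 \<supseteq> \<dots>\<close>: \<open>A 0\<close> is the set of aperiodic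
  points, and \<open>A (j + 1) \<subseteq> A j\<close> is chosen so that its visits along an orbit are more than
  \<open>j + 1\<close> steps apart while every visit of \<open>A j\<close> lies within \<open>j + 1\<close> steps of a visit of
  \<open>A (j + 1)\<close>. The first property gives \<open>\<mu> (A (j + 1)) \<le> 1 / (j + 2)\<close>, so almost every orbit
  avoids \<open>\<Inter>j. A j\<close>; on such orbits every point has a finite level (the depth of the
  hierarchy containing it), and by the second property every level is exceeded infinitely
  often in both directions.

  The label at time \<open>p\<close> records the distance from \<open>p + 1\<close> back to the last strictly higher
  level, and, for every time from \<open>p\<close> up to the next strictly higher level, the level there,
  the distance back to a strictly higher level, and the first \<open>l p\<close> bits saying which sets
  of a countable separating family of open sets contain the point. Every bit at time 0 is
  recorded at some earlier time, so the labels generate. If the label at time \<open>-1\<close> is \<open>n\<close>,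
  the last time \<open>t\<close> before 0 of higher level is within \<open>n\<close> steps, and the stretch recorded
  at \<open>t\<close> covers the one recorded at 0: the labels at times \<open>-n, \<dots>, -1\<close> determine the label
  at 0.\<close>

section \<open>Codes of two-sided level sequences\<close>

definition unbounded_both_ways :: "(int \<Rightarrow> nat) \<Rightarrow> bool" where
  "unbounded_both_ways l \<longleftrightarrow> (\<forall>j a. (\<exists>i>a. j < l i) \<and> (\<exists>i<a. j < l i))"

definition rise_right :: "(int \<Rightarrow> nat) \<Rightarrow> int \<Rightarrow> nat" where
  "rise_right l p = (LEAST k. 0 < k \<and> l p < l (p + int k))"

definition rise_left :: "(int \<Rightarrow> nat) \<Rightarrow> int \<Rightarrow> nat" where
  "rise_left l p = (LEAST k. 0 < k \<and> l p < l (p - int k))"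

definition site ::
    "(int \<Rightarrow> nat) \<Rightarrow> (int \<Rightarrow> nat \<Rightarrow> bool) \<Rightarrow> nat \<Rightarrow> int \<Rightarrow> nat \<times> nat \<times> bool list" where
  "site l b m i = (l i, rise_left l i, map (b i) [0..<m])"

definition block ::
    "(int \<Rightarrow> nat) \<Rightarrow> (int \<Rightarrow> nat \<Rightarrow> bool) \<Rightarrow> int \<Rightarrow> (nat \<times> nat \<times> bool list) list" where
  "block l b p = map (\<lambda>k. site l b (l p) (p + int k)) [0..<Suc (rise_right l p)]"

text \<open>The \<open>Suc\<close> makes codes positive, as the labels of the theorem start at 1.\<close>
definition code :: "(int \<Rightarrow> nat) \<Rightarrow> (int \<Rightarrow> nat \<Rightarrow> bool) \<Rightarrow> int \<Rightarrow> nat" where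
  "code l b p = Suc (prod_encode (rise_left l (p + 1), to_nat (block l b p)))"

context
  fixes l :: "int \<Rightarrow> nat"
  assumes unbounded: "unbounded_both_ways l"
begin

lemma rise_right_pos: "0 < rise_right l p"
  and rise_right_higher: "l p < l (p + int (rise_right l p))"
proof -
  obtain i where "i > p" "l p < l i"
    using unbounded unfolding unbounded_both_ways_def by blast
  then have "0 < nat (i - p) \<and> l p < l (p + int (nat (i - p)))" by auto
  from LeastI[of "\<lambda>k. 0 < k \<and> l p < l (p + int k)", OF this]
  show "0 < rise_right l p" "l p < l (p + int (rise_right l p))"
    unfolding rise_right_def by auto
qed

lemma rise_left_pos: "0 < rise_left l p"
  and rise_left_higher: "l p < l (p - int (rise_left l p))"
proof -
  obtain i where "i < p" "l p < l i"
    using unbounded unfolding unbounded_both_ways_def by blast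
  then have "0 < nat (p - i) \<and> l p < l (p - int (nat (p - i)))" by auto
  from LeastI[of "\<lambda>k. 0 < k \<and> l p < l (p - int k)", OF this]
  show "0 < rise_left l p" "l p < l (p - int (rise_left l p))"
    unfolding rise_left_def by auto
qed

end

lemma rise_right_least: "0 < k \<Longrightarrow> k < rise_right l p \<Longrightarrow> l (p + int k) \<le> l p"
  unfolding rise_right_def using not_less_Least by (metis not_le)

lemma rise_left_least: "0 < k \<Longrightarrow> k < rise_left l p \<Longrightarrow> l (p - int k) \<le> l p"
  unfolding rise_left_def using not_less_Least by (metis not_le)

lemma rise_right_cong:
  assumes "unbounded_both_ways l" and "\<And>k. k \<le> rise_right l p \<Longrightarrow> l' (p + int k) = l (p + int k)"
  shows "rise_right l' p = rise_right l p"
  unfolding rise_right_def[of l']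
proof (rule Least_equality)
  have "l' p = l p" using assms(2)[of 0] by simp
  then show "0 < rise_right l p \<and> l' p < l' (p + int (rise_right l p))"
    using assms rise_right_pos rise_right_higher by auto
next
  fix k assume k: "0 < k \<and> l' p < l' (p + int k)"
  show "rise_right l p \<le> k"
  proof (rule ccontr)
    assume "\<not> rise_right l p \<le> k"
    then show False
      using k rise_right_least[of k l p] assms(2)[of k] assms(2)[of 0] by simp
  qed
qed

lemma rise_left_cong:
  assumes "unbounded_both_ways l" and "\<And>k. k \<le> rise_left l p \<Longrightarrow> l' (p - int k) = l (p - int k)"
  shows "rise_left l' p = rise_left l p"
  unfolding rise_left_def[of l']
proof (rule Least_equality)
  have "l' p = l p" using assms(2)[of 0] by simp
  then show "0 < rise_left l p \<and> l' p < l' (p - int (rise_left l p))"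
    using assms rise_left_pos rise_left_higher by auto
next
  fix k assume k: "0 < k \<and> l' p < l' (p - int k)"
  show "rise_left l p \<le> k"
  proof (rule ccontr)
    assume "\<not> rise_left l p \<le> k"
    then show False
      using k rise_left_least[of k l p] assms(2)[of k] assms(2)[of 0] by simp
  qed
qed

lemma length_block [simp]: "length (block l b p) = Suc (rise_right l p)"
  by (simp add: block_def)

lemma nth_block: "k \<le> rise_right l p \<Longrightarrow> block l b p ! k = site l b (l p) (p + int k)"
  unfolding block_def by (simp del: upt_Suc)

lemma code_eqD:
  assumes "code l' b' p = code l b p"
  shows "rise_left l' (p + 1) = rise_left l (p + 1)" and "block l' b' p = block l b p"
  using assms unfolding code_def by (auto simp: prod_encode_eq)

lemma block_eqD:
  assumes "block l' b' p = block l b p" and "k \<le> rise_right l p"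
  shows "rise_right l' p = rise_right l p" and "l' (p + int k) = l (p + int k)"
    and "rise_left l' (p + int k) = rise_left l (p + int k)"
    and "\<forall>j<l p. b' (p + int k) j = b (p + int k) j"
proof -
  show rr: "rise_right l' p = rise_right l p"
    using arg_cong[OF assms(1), of length] by simp
  have "block l' b' p ! 0 = block l b p ! 0" using assms(1) by simp
  then have lp: "l' p = l p" by (simp add: nth_block rr site_def)
  have "block l' b' p ! k = block l b p ! k" using assms(1) by simp
  then have "site l' b' (l p) (p + int k) = site l b (l p) (p + int k)"
    using assms(2) rr lp by (simp add: nth_block)
  then show "l' (p + int k) = l (p + int k)" "rise_left l' (p + int k) = rise_left l (p + int k)"
    and "\<forall>j<l p. b' (p + int k) j = b (p + int k) j"
    by (auto simp: site_def map_eq_conv)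
qed

lemma block_cong:
  assumes "rise_right l' p = rise_right l p"
    and "\<And>k. k \<le> rise_right l p \<Longrightarrow> l' (p + int k) = l (p + int k)
           \<and> rise_left l' (p + int k) = rise_left l (p + int k)
           \<and> (\<forall>j<l p. b' (p + int k) j = b (p + int k) j)"
  shows "block l' b' p = block l b p"
proof -
  have "l' p = l p" using assms(2)[of 0] by simp
  then show ?thesis
    unfolding block_def assms(1) using assms(2)
    by (intro map_cong) (auto simp: site_def less_Suc_eq_le)
qed

lemma rise_right_le_rise_right_rise_left:
  assumes "unbounded_both_ways l"
  shows "p + int (rise_right l p) \<le> (p - int (rise_left l p)) + int (rise_right l (p - int (rise_left l p)))"
proof (rule ccontr)
  define t where "t = p - int (rise_left l p)"
  define r where "r = t + int (rise_right l t)"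
  assume "\<not> ?thesis"
  then have r_lt: "r < p + int (rise_right l p)" unfolding r_def t_def by simp
  have "l p < l t" "l t < l r" "t < r"
    unfolding r_def t_def using assms rise_left_higher rise_right_higher rise_right_pos by auto
  moreover have "l r \<le> l p"
  proof (cases "r \<le> p")
    case True
    have "nat (p - r) < rise_left l p" using True \<open>t < r\<close> unfolding t_def by simp
    then show ?thesis
      using True rise_left_least[of "nat (p - r)" l p] by (cases "r = p") auto
  next
    case False
    then show ?thesis using r_lt rise_right_least[of "nat (r - p)" l p] by auto
  qed
  ultimately show False by simp
qed

lemma code_eq_if_block_eq_at_rise_left:
  assumes unbounded: "unbounded_both_ways l"
    and eq: "block l' b' (p - int (rise_left l p)) = block l b (p - int (rise_left l p))"
  shows "code l' b' p = code l b p"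
proof -
  define t where "t = p - int (rise_left l p)"
  have agree: "l' (p + int k) = l (p + int k) \<and> rise_left l' (p + int k) = rise_left l (p + int k)
      \<and> (\<forall>j<l p. b' (p + int k) j = b (p + int k) j)" if "k \<le> rise_right l p" for k
  proof -
    have "rise_left l p + k \<le> rise_right l t"
      using rise_right_le_rise_right_rise_left[OF unbounded, of p] that unfolding t_def by simp
    note site_eq = block_eqD(2-4)[OF eq[folded t_def] this]
    have index: "t + int (rise_left l p + k) = p + int k" unfolding t_def by simp
    have "l p < l t" using rise_left_higher[OF unbounded] unfolding t_def .
    with site_eq show ?thesis unfolding index by auto
  qed
  have "rise_right l' p = rise_right l p"
    by (rule rise_right_cong[OF unbounded]) (use agree in blast)
  then have "block l' b' p = block l b p" by (rule block_cong) (rule agree)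
  moreover have "rise_left l' (p + 1) = rise_left l (p + 1)"
    using agree[of 1] rise_right_pos[OF unbounded, of p] by simp
  ultimately show ?thesis unfolding code_def by simp
qed

text \<open>The code at \<open>-1\<close> exceeds the distance back to a strictly higher level at \<open>0\<close>, and
  there the recorded block reaches beyond the block at \<open>0\<close>.\<close>
lemma code_determined_by_past:
  assumes unbounded: "unbounded_both_ways l" and n: "n = code l b (-1)"
    and eq: "\<And>i. - int n \<le> i \<Longrightarrow> i \<le> -1 \<Longrightarrow> code l' b' i = code l b i"
  shows "code l' b' 0 = code l b 0"
proof -
  define P where "P = rise_left l 0"
  have "0 < n" unfolding n code_def by simp
  then have "code l' b' (-1) = code l b (-1)" using eq by simp
  from code_eqD(1)[OF this] have "rise_left l' 0 = P" unfolding P_def by simp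
  have "P \<le> prod_encode (P, to_nat (block l b (-1)))" by (rule le_prod_encode_1)
  then have "P < n" unfolding n code_def P_def by simp
  moreover have "0 < P" unfolding P_def using rise_left_pos[OF unbounded] .
  ultimately have "code l' b' (- int P) = code l b (- int P)" using eq by simp
  from code_eqD(2)[OF this] have "block l' b' (0 - int P) = block l b (0 - int P)" by simp
  then show ?thesis unfolding P_def by (rule code_eq_if_block_eq_at_rise_left[OF unbounded])
qed

lemma code_determines_bits:
  assumes unbounded: "unbounded_both_ways l" and eq: "\<And>i. code l' b' i = code l b i"
  shows "b' 0 j = b 0 j"
proof -
  have "\<exists>k. j < l (- int k)"
  proof -
    obtain i where "i < 0" "j < l i" using unbounded unfolding unbounded_both_ways_def by blast
    then show ?thesis by (intro exI[of _ "nat (- i)"]) simp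
  qed
  define K where "K = (LEAST k. j < l (- int k))"
  define p where "p = - int K"
  have j_lt: "j < l p" unfolding p_def K_def by (rule LeastI_ex) fact
  have K_le: "K \<le> rise_right l p"
  proof (rule ccontr)
    assume "\<not> K \<le> rise_right l p"
    then have "K - rise_right l p < K" and "- int (K - rise_right l p) = p + int (rise_right l p)"
      using rise_right_pos[OF unbounded, of p] unfolding p_def by auto
    then have "l (p + int (rise_right l p)) \<le> j"
      using not_less_Least[of "K - rise_right l p" "\<lambda>k. j < l (- int k)"] unfolding K_def by simp
    then show False using rise_right_higher[OF unbounded, of p] j_lt by simp
  qed
  have "block l' b' p = block l b p" using code_eqD(2)[OF eq[of p]] .
  from block_eqD(4)[OF this K_le] j_lt show ?thesis unfolding p_def by simp
qed

lemma code_local: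
  assumes unbounded: "unbounded_both_ways l"
    and levels_agree: "\<And>i. - int (\<Sum>k\<le>rise_right l 0. rise_left l (int k)) \<le> i \<Longrightarrow>
                 i \<le> int (rise_right l 0) \<Longrightarrow> l' i = l i"
    and bits_agree: "\<And>i j. 0 \<le> i \<Longrightarrow> i \<le> int (rise_right l 0) \<Longrightarrow> j < l 0 \<Longrightarrow> b' i j = b i j"
  shows "code l' b' 0 = code l b 0"
proof -
  have rise_left_eq: "rise_left l' (int k) = rise_left l (int k)" if "k \<le> rise_right l 0" for k
  proof (rule rise_left_cong[OF unbounded])
    fix k' assume "k' \<le> rise_left l (int k)"
    moreover have "rise_left l (int k) \<le> (\<Sum>k\<le>rise_right l 0. rise_left l (int k))"
      by (rule member_le_sum) (use that in auto)
    ultimately have "- int (\<Sum>k\<le>rise_right l 0. rise_left l (int k)) \<le> int k - int k'"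
      by linarith
    then show "l' (int k - int k') = l (int k - int k')"
      using levels_agree that by simp
  qed
  have levels_agree_right: "l' (int k) = l (int k)" if "k \<le> rise_right l 0" for k
    by (rule levels_agree) (use that in linarith)+
  have "rise_right l' 0 = rise_right l 0"
    by (rule rise_right_cong[OF unbounded]) (use levels_agree_right in simp)
  then have "block l' b' 0 = block l b 0"
    by (rule block_cong) (use levels_agree_right bits_agree rise_left_eq in simp)
  moreover have "rise_left l' 1 = rise_left l 1"
    using rise_left_eq[of 1] rise_right_pos[OF unbounded, of 0] by simp
  ultimately show ?thesis unfolding code_def by simp
qed

lemma code_shift: "code (\<lambda>i. l (i + k)) (\<lambda>i. b (i + k)) p = code l b (p + k)"
proof -
  have "rise_right (\<lambda>i. l (i + k)) q = rise_right l (q + k)"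
    and "rise_left (\<lambda>i. l (i + k)) q = rise_left l (q + k)" for q
    unfolding rise_right_def rise_left_def by (simp_all add: algebra_simps)
  then show ?thesis unfolding code_def block_def site_def by (simp add: algebra_simps)
qed

lemma tpow_0 [simp]: "tpow T 0 = id"
  by (simp add: tpow_def)

lemma tpow_of_nat: "tpow T (int n) = T ^^ n"
  by (simp add: tpow_def)

lemma tpow_neg_of_nat: "tpow T (- int n) = inv T ^^ n"
  by (cases "n = 0") (simp_all add: tpow_def)

lemma tpow_plus1:
  assumes "bij T"
  shows "tpow T (i + 1) x = T (tpow T i x)"
proof -
  have T_inv: "T (inv T y) = y" for y using assms by (simp add: bij_is_surj surj_f_inv_f)
  consider "0 \<le> i" | "i = -1" | "i < -1" by linarith
  then show ?thesis
  proof cases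
    case 1
    then have "nat (i + 1) = Suc (nat i)" by simp
    with 1 show ?thesis by (simp add: tpow_def)
  next
    case 2
    then show ?thesis by (simp add: tpow_def T_inv)
  next
    case 3
    then have "nat (- i) = Suc (nat (- (i + 1)))" by simp
    with 3 show ?thesis by (simp add: tpow_def T_inv)
  qed
qed

lemma tpow_minus1:
  assumes "bij T"
  shows "tpow T (i - 1) x = inv T (tpow T i x)"
  using tpow_plus1[OF assms, of "i - 1"] assms by (simp add: bij_is_inj)

lemma tpow_add:
  assumes "bij T"
  shows "tpow T (i + j) x = tpow T i (tpow T j x)"
proof (induction i rule: int_induct[where k = 0])
  case (step1 i)
  have "tpow T (i + 1 + j) x = tpow T ((i + j) + 1) x" by (simp add: algebra_simps)
  with step1 show ?case by (simp add: tpow_plus1[OF assms])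
next
  case (step2 i)
  have "tpow T (i - 1 + j) x = tpow T ((i + j) - 1) x" by (simp add: algebra_simps)
  with step2 show ?case by (simp add: tpow_minus1[OF assms])
qed simp

lemma tpow_inj:
  assumes "bij T" and "tpow T k y = tpow T k z"
  shows "y = z"
proof -
  have "tpow T (- k + k) y = tpow T (- k + k) z"
    using assms by (simp only: tpow_add[OF assms(1)])
  then show ?thesis by simp
qed

lemma countable_separating_opens:
  "\<exists>U :: nat \<Rightarrow> 'a::{second_countable_topology, t1_space} set.
     (\<forall>j. open (U j)) \<and> (\<forall>x y. x \<noteq> y \<longrightarrow> (\<exists>j. x \<in> U j \<and> y \<notin> U j))"
proof -
  obtain B :: "'a set set" where B: "countable B" "topological_basis B"
    using ex_countable_basis by blast
  have "B \<noteq> {}"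
    using topological_basisE[OF B(2) open_UNIV] by (metis UNIV_I empty_iff)
  define U where "U = from_nat_into B"
  have "open (U j)" for j
    using from_nat_into[OF \<open>B \<noteq> {}\<close>] B(2) unfolding U_def topological_basis_def by auto
  moreover have "\<exists>j. x \<in> U j \<and> y \<notin> U j" if xy: "x \<noteq> y" for x y
  proof -
    obtain O' where "open O'" "x \<in> O'" "y \<notin> O'" using t1_space[OF xy] by blast
    then obtain V where V: "V \<in> B" "x \<in> V" "V \<subseteq> O'" using topological_basisE[OF B(2)] by metis
    then obtain j where "V = U j"
      unfolding U_def using range_from_nat_into[OF \<open>B \<noteq> {}\<close> B(1)] by (metis imageE)
    with V \<open>y \<notin> O'\<close> show ?thesis by auto
  qed
  ultimately show ?thesis by blast
qed

definition separating_open :: "nat \<Rightarrow> 'a::{second_countable_topology, t1_space} set" where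
  "separating_open = (SOME U. (\<forall>j. open (U j)) \<and> (\<forall>x y. x \<noteq> y \<longrightarrow> (\<exists>j. x \<in> U j \<and> y \<notin> U j)))"

lemma open_separating_open: "open (separating_open j)"
  and separating_open_separates: "x \<noteq> y \<Longrightarrow> \<exists>j. x \<in> separating_open j \<and> y \<notin> separating_open j"
  using someI_ex[OF countable_separating_opens] unfolding separating_open_def by blast+

lemma measurable_distr_funpow:
  assumes "f \<in> measurable M M" and "distr M M f = M"
  shows "f ^^ n \<in> measurable M M \<and> distr M M (f ^^ n) = M"
proof (induction n)
  case (Suc n)
  have "distr M M (f ^^ Suc n) = distr (distr M M (f ^^ n)) M f"
    unfolding funpow.simps(2) using distr_distr[OF assms(1) conjunct1[OF Suc]] by (rule sym)
  with Suc assms show ?case by (simp add: measurable_comp[of _ M M] comp_def)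
qed (simp add: distr_id)

lemma invertible_mpt_distr_inv:
  assumes "invertible_mpt M T"
  shows "distr M M (inv T) = M"
proof -
  have T: "bij T" "T \<in> measurable M M" "inv T \<in> measurable M M" "distr M M T = M"
    using assms unfolding invertible_mpt_def by auto
  then have "distr M M (inv T) = distr M M (inv T \<circ> T)"
    using distr_distr[OF T(3,2)] by simp
  also have "\<dots> = M"
    using T(1) by (simp add: bij_is_inj distr_id[folded id_def])
  finally show ?thesis .
qed

lemma
  assumes "invertible_mpt M T"
  shows measurable_tpow: "tpow T i \<in> measurable M M"
    and distr_tpow: "distr M M (tpow T i) = M"
  using assms invertible_mpt_distr_inv[OF assms] measurable_distr_funpow
  unfolding invertible_mpt_def tpow_def by auto

locale nonperiodic_system =
  fixes M :: "'a::polish_space measure" and T :: "'a \<Rightarrow> 'a"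
  assumes lebesgue: "lebesgue_prob_space M" and nonperiodic: "non_periodic M T"
begin

lemma bij_T: "bij T" and invertible: "invertible_mpt M T"
  using nonperiodic unfolding non_periodic_def invertible_mpt_def by auto

lemma borel_completion: obtains N where "sets N = sets borel" "prob_space N" "M = completion N"
  using lebesgue unfolding lebesgue_prob_space_def by blast

lemma space_M [simp]: "space M = UNIV"
  by (metis borel_completion sets_eq_imp_space_eq space_borel space_completion)

sublocale prob_space M
  by (metis borel_completion prob_space.prob_space_completion)

lemma borel_sets_M: "A \<in> sets borel \<Longrightarrow> A \<in> sets M"
  by (metis borel_completion sets_completionI_sets)

lemma null_sets_subset: "B \<subseteq> A \<Longrightarrow> A \<in> null_sets M \<Longrightarrow> B \<in> null_sets M"
  by (metis borel_completion null_sets_completion_subset)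

lemma sets_vimage_tpow: "A \<in> sets M \<Longrightarrow> tpow T i -` A \<in> sets M"
  using measurable_sets[OF measurable_tpow[OF invertible]] by simp

lemma emeasure_vimage_tpow: "A \<in> sets M \<Longrightarrow> emeasure M (tpow T i -` A) = emeasure M A"
  using emeasure_distr[OF measurable_tpow[OF invertible]] distr_tpow[OF invertible]
  by (metis space_M Int_UNIV_right)

lemma null_sets_vimage_tpow: "A \<in> null_sets M \<Longrightarrow> tpow T i -` A \<in> null_sets M"
  using sets_vimage_tpow emeasure_vimage_tpow by (auto simp: null_sets_def)

lemma sets_INT_countable:
  "countable I \<Longrightarrow> (\<And>i. i \<in> I \<Longrightarrow> F i \<in> sets M) \<Longrightarrow> (\<Inter>i\<in>I. F i) \<in> sets M"
  using sets.countable_INT''[OF sets.top[of M, unfolded space_M]] by blast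

lemma sets_separating_open: "separating_open j \<in> sets M"
  by (rule borel_sets_M[OF borel_open[OF open_separating_open]])

definition aperiodic :: "'a set" where
  "aperiodic = {\<omega>. \<forall>i::nat. i \<ge> 1 \<longrightarrow> (T ^^ i) \<omega> \<noteq> \<omega>}"

lemma null_sets_compl_aperiodic: "- aperiodic \<in> null_sets M"
  using nonperiodic unfolding non_periodic_def aperiodic_def by (simp add: Collect_neg_eq[symmetric])

lemma sets_aperiodic: "aperiodic \<in> sets M"
  using sets.compl_sets[OF null_setsD2[OF null_sets_compl_aperiodic]] by simp

lemma tpow_neq_if_aperiodic:
  assumes "y \<in> aperiodic" and "i \<noteq> 0"
  shows "tpow T i y \<noteq> y"
proof
  assume fix_i: "tpow T i y = y"
  obtain n :: nat where "n \<ge> 1" "tpow T (int n) y = y"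
  proof (cases "0 < i")
    case True
    then show ?thesis using fix_i that[of "nat i"] by simp
  next
    case False
    have "tpow T (- i) y = tpow T (- i) (tpow T i y)" using fix_i by simp
    also have "\<dots> = y" using tpow_add[OF bij_T, of "- i" i y, symmetric] by simp
    finally show ?thesis using False assms(2) that[of "nat (- i)"] by simp
  qed
  then show False using assms(1) unfolding aperiodic_def by (auto simp: tpow_of_nat)
qed

lemma tpow_aperiodic:
  assumes "y \<in> aperiodic"
  shows "tpow T k y \<in> aperiodic"
proof -
  have "(T ^^ n) (tpow T k y) \<noteq> tpow T k y" if "n \<ge> 1" for n :: nat
  proof
    assume "(T ^^ n) (tpow T k y) = tpow T k y"
    then have "tpow T k (tpow T (int n) y) = tpow T k y"
      by (metis tpow_of_nat tpow_add[OF bij_T] add.commute)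
    then have "tpow T (int n) y = y" by (rule tpow_inj[OF bij_T])
    then show False using tpow_neq_if_aperiodic[OF assms, of "int n"] that by simp
  qed
  then show ?thesis unfolding aperiodic_def by auto
qed

section \<open>Markers\<close>

text \<open>Cells are indexed by natural numbers encoding lists of indices of separating open sets,
  so that countably many of them cover the aperiodic points.\<close>
definition cell :: "nat \<Rightarrow> nat \<Rightarrow> 'a set" where
  "cell m s = (let js = (from_nat s :: nat list) in
     if length js = m
     then (\<Inter>k<m. separating_open (js ! k) - tpow T (int (Suc k)) -` separating_open (js ! k))
     else {})"

lemma sets_cell: "cell m s \<in> sets M"
  unfolding cell_def Let_def
  by (auto intro!: sets_INT_countable sets.Diff sets_separating_open sets_vimage_tpow)

lemma cell_disjoint_tpow:
  assumes "y \<in> cell m s" and "1 \<le> i" and "i \<le> m"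
  shows "tpow T (int i) y \<notin> cell m s"
proof
  assume "tpow T (int i) y \<in> cell m s"
  with assms show False unfolding cell_def Let_def
    by (auto split: if_splits dest!: bspec[of _ _ "i - 1"])
qed

lemma aperiodic_subset_cells:
  assumes "y \<in> aperiodic"
  shows "\<exists>s. y \<in> cell m s"
proof -
  have "\<exists>j. y \<in> separating_open j \<and> tpow T (int (Suc k)) y \<notin> separating_open j" for k
    using separating_open_separates tpow_neq_if_aperiodic[OF assms, of "int (Suc k)"] by (metis of_nat_eq_0_iff nat.discI)
  then obtain js where "\<And>k. y \<in> separating_open (js k) \<and> tpow T (int (Suc k)) y \<notin> separating_open (js k)"
    by metis
  then have "y \<in> cell m (to_nat (map js [0..<m]))" unfolding cell_def by simp
  then show ?thesis by blast
qed

definition orbit_nbhd :: "nat \<Rightarrow> 'a set \<Rightarrow> 'a set" where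
  "orbit_nbhd m S = (\<Union>i\<in>{- int m..int m}. tpow T i -` S)"

lemma sets_orbit_nbhd: "S \<in> sets M \<Longrightarrow> orbit_nbhd m S \<in> sets M"
  unfolding orbit_nbhd_def by (intro sets.finite_UN sets_vimage_tpow) auto

primrec marker_stage :: "'a set \<Rightarrow> nat \<Rightarrow> nat \<Rightarrow> 'a set" where
  "marker_stage B m 0 = {}"
| "marker_stage B m (Suc s) =
     marker_stage B m s \<union> (cell m s \<inter> B - orbit_nbhd m (marker_stage B m s))"

definition marker :: "'a set \<Rightarrow> nat \<Rightarrow> 'a set" where
  "marker B m = (\<Union>s. marker_stage B m s)"

lemma sets_marker: "B \<in> sets M \<Longrightarrow> marker B m \<in> sets M"
proof -
  assume "B \<in> sets M"
  then have "marker_stage B m s \<in> sets M" for s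
    by (induction s) (auto intro!: sets.Un sets.Diff sets.Int sets_cell sets_orbit_nbhd)
  then show ?thesis unfolding marker_def by blast
qed

lemma marker_subset: "marker B m \<subseteq> B"
proof -
  have "marker_stage B m s \<subseteq> B" for s by (induction s) auto
  then show ?thesis unfolding marker_def by auto
qed

lemma marker_stage_disjoint_tpow:
  "1 \<le> i \<Longrightarrow> i \<le> m \<Longrightarrow> y \<in> marker_stage B m s \<Longrightarrow> tpow T (int i) y \<notin> marker_stage B m s"
proof (induction s arbitrary: y)
  case (Suc s)
  define z where "z = tpow T (int i) y"
  have undo: "tpow T (- int i) z = y"
    unfolding z_def using tpow_add[OF bij_T, of "- int i" "int i" y] by simp
  have range: "- int i \<in> {- int m..int m}" "int i \<in> {- int m..int m}" using Suc.prems by auto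
  have z_near: "z \<in> orbit_nbhd m (marker_stage B m s)" if "y \<in> marker_stage B m s"
    unfolding orbit_nbhd_def using range(1) undo that by (intro UN_I[of "- int i"]) auto
  have y_near: "y \<in> orbit_nbhd m (marker_stage B m s)" if "z \<in> marker_stage B m s"
    unfolding orbit_nbhd_def using range(2) that unfolding z_def by (intro UN_I[of "int i"]) auto
  have "z \<notin> marker_stage B m (Suc s)"
  proof
    assume "z \<in> marker_stage B m (Suc s)"
    then consider "z \<in> marker_stage B m s" | "z \<in> cell m s" "z \<notin> orbit_nbhd m (marker_stage B m s)"
      by auto
    moreover from Suc.prems(3) consider "y \<in> marker_stage B m s"
      | "y \<in> cell m s" "y \<notin> orbit_nbhd m (marker_stage B m s)"
      by auto
    ultimately show False
      using Suc.IH[OF Suc.prems(1,2)] cell_disjoint_tpow[OF _ Suc.prems(1,2), of y s] z_near y_near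
      unfolding z_def by metis
  qed
  then show ?case unfolding z_def .
qed simp

lemma marker_disjoint_tpow:
  assumes "1 \<le> i" "i \<le> m" "y \<in> marker B m"
  shows "tpow T (int i) y \<notin> marker B m"
proof
  assume "tpow T (int i) y \<in> marker B m"
  with assms(3) obtain s1 s2 where "y \<in> marker_stage B m s1" "tpow T (int i) y \<in> marker_stage B m s2"
    unfolding marker_def by auto
  moreover have "mono (marker_stage B m)" by (rule incseq_SucI) auto
  then have "marker_stage B m s1 \<subseteq> marker_stage B m (max s1 s2)"
    and "marker_stage B m s2 \<subseteq> marker_stage B m (max s1 s2)"
    by (simp_all add: monoD)
  ultimately show False using marker_stage_disjoint_tpow[OF assms(1,2)] by blast
qed

lemma marker_near:
  assumes "y \<in> B" and "y \<in> aperiodic"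
  shows "\<exists>i. \<bar>i\<bar> \<le> int m \<and> tpow T i y \<in> marker B m"
proof -
  obtain s where s: "y \<in> cell m s" using aperiodic_subset_cells[OF assms(2)] by blast
  show ?thesis
  proof (cases "y \<in> orbit_nbhd m (marker_stage B m s)")
    case True
    then obtain i where "i \<in> {- int m..int m}" "tpow T i y \<in> marker_stage B m s"
      unfolding orbit_nbhd_def by auto
    then show ?thesis unfolding marker_def by (intro exI[of _ i]) auto
  next
    case False
    then have "y \<in> marker_stage B m (Suc s)" using s assms by simp
    then have "y \<in> marker B m" unfolding marker_def by blast
    then show ?thesis by (intro exI[of _ 0]) simp
  qed
qed

text \<open>The preimages of \<open>marker B m\<close> under \<open>T\<^sup>0, \<dots>, T\<^sup>m\<close> are disjoint and of equal measure.\<close>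
lemma marker_measure_le:
  assumes "B \<in> sets M"
  shows "real (Suc m) * measure M (marker B m) \<le> 1"
proof -
  define E where "E k = tpow T (int k) -` marker B m" for k
  have sets_E: "E k \<in> sets M" for k unfolding E_def using sets_marker[OF assms] by (rule sets_vimage_tpow)
  have disjoint: "E k \<inter> E k' = {}" if "k < k'" "k' \<le> m" for k k'
  proof (rule ccontr)
    assume "E k \<inter> E k' \<noteq> {}"
    then obtain z where "tpow T (int k) z \<in> marker B m" "tpow T (int k') z \<in> marker B m"
      unfolding E_def by auto
    moreover have "tpow T (int k') z = tpow T (int (k' - k)) (tpow T (int k) z)"
      using that tpow_add[OF bij_T, of "int (k' - k)" "int k" z] by simp
    ultimately show False using marker_disjoint_tpow[of "k' - k" m] that by simp
  qed
  have "disjoint_family_on E {..m}"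
    unfolding disjoint_family_on_def
  proof (intro ballI impI)
    fix k k' assume "k \<in> {..m}" "k' \<in> {..m}" "k \<noteq> k'"
    then show "E k \<inter> E k' = {}" using disjoint[of k k'] disjoint[of k' k] by (cases "k < k'") auto
  qed
  then have "measure M (\<Union>k\<le>m. E k) = (\<Sum>k\<le>m. measure M (E k))"
    using sets_E by (intro finite_measure_finite_Union) auto
  also have "\<dots> = real (Suc m) * measure M (marker B m)"
    unfolding E_def measure_def using emeasure_vimage_tpow[OF sets_marker[OF assms]] by simp
  finally show ?thesis using prob_le_1[of "\<Union>k\<le>m. E k"] by simp
qed

primrec level_set :: "nat \<Rightarrow> 'a set" where
  "level_set 0 = aperiodic"
| "level_set (Suc j) = marker (level_set j) (Suc j)"

lemma sets_level_set: "level_set j \<in> sets M"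
  by (induction j) (auto intro: sets_aperiodic sets_marker)

lemma level_set_antimono: "j \<le> j' \<Longrightarrow> level_set j' \<subseteq> level_set j"
  by (rule lift_Suc_antimono_le[of level_set]) (use marker_subset in auto)

lemma level_set_measure_le: "real (Suc (Suc j)) * measure M (level_set (Suc j)) \<le> 1"
  using marker_measure_le[OF sets_level_set[of j], of "Suc j"] by simp

lemma level_set_recurrent:
  assumes "x \<in> aperiodic"
  shows "(\<exists>i>a. tpow T i x \<in> level_set j) \<and> (\<exists>i<a. tpow T i x \<in> level_set j)"
proof (induction j arbitrary: a)
  case 0
  have "a < a + 1" "a - 1 < a" by simp_all
  then show ?case using tpow_aperiodic[OF assms] unfolding level_set.simps(1) by blast
next
  case (Suc j)
  have shift: "\<exists>i'. \<bar>i' - i\<bar> \<le> int (Suc j) \<and> tpow T i' x \<in> level_set (Suc j)"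
    if in_level: "tpow T i x \<in> level_set j" for i
  proof -
    obtain k where "\<bar>k\<bar> \<le> int (Suc j)" "tpow T k (tpow T i x) \<in> level_set (Suc j)"
      using marker_near[OF in_level tpow_aperiodic[OF assms], of "Suc j"] by auto
    then show ?thesis by (intro exI[of _ "k + i"]) (simp add: tpow_add[OF bij_T])
  qed
  obtain i where i: "a + int (Suc j) < i" "tpow T i x \<in> level_set j" using Suc by blast
  obtain i' where i': "\<bar>i' - i\<bar> \<le> int (Suc j)" "tpow T i' x \<in> level_set (Suc j)"
    using shift[OF i(2)] by blast
  obtain k where k: "k < a - int (Suc j)" "tpow T k x \<in> level_set j" using Suc by blast
  obtain k' where k': "\<bar>k' - k\<bar> \<le> int (Suc j)" "tpow T k' x \<in> level_set (Suc j)"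
    using shift[OF k(2)] by blast
  have "a < i'" "k' < a" using i(1) i'(1) k(1) k'(1) by (simp_all add: abs_le_iff)
  with i'(2) k'(2) show ?case by blast
qed

lemma null_sets_Inter_level_set: "(\<Inter>j. level_set j) \<in> null_sets M"
proof -
  define I where "I = (\<Inter>j. level_set j)"
  have "I \<in> sets M" unfolding I_def by (intro sets.countable_INT) (auto intro: sets_level_set)
  have "measure M I = 0"
  proof (rule ccontr)
    assume "measure M I \<noteq> 0"
    then have "0 < measure M I" using measure_nonneg[of M I] by linarith
    then obtain n :: nat where "0 < n" "inverse (real n) < measure M I"
      using ex_inverse_of_nat_less by blast
    then have "1 < real n * measure M I" by (simp add: field_simps)
    also have "\<dots> \<le> real (Suc (Suc n)) * measure M (level_set (Suc n))"
      using finite_measure_mono[OF INT_lower[of "Suc n" UNIV level_set] sets_level_set]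
      unfolding I_def by (intro mult_mono) auto
    also have "\<dots> \<le> 1" by (rule level_set_measure_le)
    finally show False by simp
  qed
  with \<open>I \<in> sets M\<close> show ?thesis unfolding I_def by (intro null_setsI) (simp_all add: emeasure_eq_measure)
qed

definition regular :: "'a set" where
  "regular = aperiodic - (\<Union>i. tpow T i -` (\<Inter>j. level_set j))"

lemma null_sets_compl_regular: "- regular \<in> null_sets M"
proof -
  have "- regular = - aperiodic \<union> (\<Union>i. tpow T i -` (\<Inter>j. level_set j))"
    unfolding regular_def by auto
  moreover have "(\<Union>i. tpow T i -` (\<Inter>j. level_set j)) \<in> null_sets M"
    using null_sets_vimage_tpow[OF null_sets_Inter_level_set] by (intro null_sets_UN') auto
  ultimately show ?thesis using null_sets_compl_aperiodic by (simp add: null_sets.Un)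
qed

lemma sets_regular: "regular \<in> sets M"
  using sets.compl_sets[OF null_setsD2[OF null_sets_compl_regular]] by simp

lemma tpow_regular:
  assumes "y \<in> regular"
  shows "tpow T k y \<in> regular"
proof -
  have "tpow T (i + k) y \<notin> (\<Inter>j. level_set j)" for i
    using assms unfolding regular_def by blast
  then have "tpow T i (tpow T k y) \<notin> (\<Inter>j. level_set j)" for i
    by (metis tpow_add[OF bij_T])
  moreover have "tpow T k y \<in> aperiodic"
    using tpow_aperiodic assms unfolding regular_def by blast
  ultimately show ?thesis unfolding regular_def by blast
qed

lemma regular_not_in_level_set:
  assumes "y \<in> regular"
  shows "\<exists>j. y \<notin> level_set (Suc j)"
proof -
  have "tpow T 0 y \<notin> (\<Inter>j. level_set j)" using assms unfolding regular_def by blast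
  then obtain j where j: "y \<notin> level_set j" by auto
  moreover have "y \<in> level_set 0" using assms unfolding regular_def by simp
  ultimately have "j \<noteq> 0" by (cases j) simp_all
  with j show ?thesis by (metis not0_implies_Suc)
qed

section \<open>The labelling\<close>

definition level :: "'a \<Rightarrow> nat" where
  "level y = (LEAST j. y \<notin> level_set (Suc j))"

lemma less_level_iff:
  assumes "y \<in> regular"
  shows "j < level y \<longleftrightarrow> y \<in> level_set (Suc j)"
proof
  assume "j < level y"
  then show "y \<in> level_set (Suc j)"
    using not_less_Least[of j "\<lambda>j. y \<notin> level_set (Suc j)"] unfolding level_def by blast
next
  assume in_level: "y \<in> level_set (Suc j)"
  have "y \<notin> level_set (Suc (level y))"
    unfolding level_def by (rule LeastI_ex[OF regular_not_in_level_set[OF assms]])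
  show "j < level y"
  proof (rule ccontr)
    assume "\<not> j < level y"
    then have "level_set (Suc j) \<subseteq> level_set (Suc (level y))" by (intro level_set_antimono) simp
    with in_level \<open>y \<notin> level_set (Suc (level y))\<close> show False by blast
  qed
qed

definition levels :: "'a \<Rightarrow> int \<Rightarrow> nat" where
  "levels x i = level (tpow T i x)"

definition bits :: "'a \<Rightarrow> int \<Rightarrow> nat \<Rightarrow> bool" where
  "bits x i j \<longleftrightarrow> tpow T i x \<in> separating_open j"

lemma unbounded_levels:
  assumes "x \<in> regular"
  shows "unbounded_both_ways (levels x)"
  unfolding unbounded_both_ways_def
proof (intro allI)
  fix j a
  obtain i i' where "i > a" "tpow T i x \<in> level_set (Suc j)" "i' < a" "tpow T i' x \<in> level_set (Suc j)"
    using level_set_recurrent[of x a "Suc j"] assms unfolding regular_def by blast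
  then show "(\<exists>i>a. j < levels x i) \<and> (\<exists>i<a. j < levels x i)"
    unfolding levels_def using less_level_iff[OF tpow_regular[OF assms]] by blast
qed

lemma levels_tpow: "levels (tpow T k x) = (\<lambda>i. levels x (i + k))"
  unfolding levels_def by (simp add: tpow_add[OF bij_T])

lemma bits_tpow: "bits (tpow T k x) = (\<lambda>i. bits x (i + k))"
  unfolding bits_def by (simp add: tpow_add[OF bij_T])

definition label :: "'a \<Rightarrow> nat" where
  "label x = (if x \<in> regular then code (levels x) (bits x) 0 else 1)"

lemma label_pos: "1 \<le> label x"
  unfolding label_def code_def by simp

lemma label_tpow:
  assumes "x \<in> regular"
  shows "label (tpow T k x) = code (levels x) (bits x) k"
  using tpow_regular[OF assms, of k] code_shift[of "levels x" k "bits x" 0]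
  unfolding label_def levels_tpow bits_tpow by simp

lemma label_generates: "generates M T label"
  unfolding generates_def
proof (intro bexI[of _ "- regular"] ballI impI null_sets_compl_regular)
  fix x y assume "x \<in> space M - - regular" "y \<in> space M - - regular"
    and eq: "\<forall>i. label (tpow T i x) = label (tpow T i y)"
  then have x: "x \<in> regular" and y: "y \<in> regular" by auto
  have "code (levels y) (bits y) i = code (levels x) (bits x) i" for i
    using eq label_tpow[OF x] label_tpow[OF y] by metis
  from code_determines_bits[OF unbounded_levels[OF x] this]
  have "y \<in> separating_open j \<longleftrightarrow> x \<in> separating_open j" for j
    unfolding bits_def by simp
  then show "x = y" using separating_open_separates by metis
qed

lemma level_eq_iff:
  assumes "y \<in> regular"
  shows "level y = v \<longleftrightarrow> y \<in> level_set v - level_set (Suc v)"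
proof (cases v)
  case 0
  have "y \<in> level_set 0" using assms unfolding regular_def by simp
  moreover have "level y = 0 \<longleftrightarrow> \<not> 0 < level y" by linarith
  ultimately show ?thesis unfolding 0 less_level_iff[OF assms] by blast
next
  case (Suc w)
  have "level y = Suc w \<longleftrightarrow> w < level y \<and> \<not> Suc w < level y" by linarith
  then show ?thesis unfolding Suc less_level_iff[OF assms] by blast
qed

definition cylinder :: "nat \<times> nat list \<times> bool list list \<Rightarrow> 'a set" where
  "cylinder = (\<lambda>(S, ls, bs).
     (\<Inter>k<length ls. tpow T (int k - int S) -` (level_set (ls ! k) - level_set (Suc (ls ! k)))) \<inter>
     (\<Inter>k<length bs. \<Inter>j<length (bs ! k). tpow T (int k) -` {y. (y \<in> separating_open j) = bs ! k ! j}))"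

lemma sets_cylinder: "cylinder c \<in> sets M"
proof -
  obtain S ls bs where c: "c = (S, ls, bs)" by (cases c)
  have bit_set: "{y. (y \<in> separating_open j) = b} \<in> sets M" for j b
    using sets_separating_open sets.compl_sets[OF sets_separating_open]
    by (cases b) (simp_all add: Collect_neg_eq Compl_eq_Diff_UNIV)
  have "(\<Inter>k<length ls. tpow T (int k - int S) -` (level_set (ls ! k) - level_set (Suc (ls ! k))))
      \<in> sets M"
    by (intro sets_INT_countable sets_vimage_tpow sets.Diff sets_level_set) simp
  moreover have "(\<Inter>k<length bs. \<Inter>j<length (bs ! k).
      tpow T (int k) -` {y. (y \<in> separating_open j) = bs ! k ! j}) \<in> sets M"
    by (intro sets_INT_countable sets_vimage_tpow bit_set) simp_all
  ultimately show ?thesis unfolding cylinder_def c by simp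
qed

lemma mem_cylinder_iff:
  assumes "y \<in> regular"
  shows "y \<in> cylinder (S, ls, bs) \<longleftrightarrow> (\<forall>k<length ls. levels y (int k - int S) = ls ! k)
     \<and> (\<forall>k<length bs. \<forall>j<length (bs ! k). bits y (int k) j = bs ! k ! j)"
  unfolding cylinder_def levels_def bits_def using level_eq_iff[OF tpow_regular[OF assms]] by auto

text \<open>Signatures take countably many values, and by \<open>code_local\<close> the signature of a regular
  point fixes its label; this is what makes the labelling measurable.\<close>
definition signature :: "'a \<Rightarrow> nat \<times> nat list \<times> bool list list" where
  "signature x = (let l = levels x; R = rise_right l 0; S = (\<Sum>k\<le>R. rise_left l (int k)) in
     (S, map (\<lambda>k. l (int k - int S)) [0..<S + R + 1], map (\<lambda>k. map (bits x (int k)) [0..<l 0]) [0..<R + 1]))"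

lemma mem_cylinder_signature: "x \<in> regular \<Longrightarrow> x \<in> cylinder (signature x)"
  unfolding signature_def Let_def by (simp add: mem_cylinder_iff del: upt_Suc)

lemma label_eq_if_mem_cylinder_signature:
  assumes x: "x \<in> regular" and y: "y \<in> regular" and "y \<in> cylinder (signature x)"
  shows "label y = label x"
proof -
  define l where "l = levels x"
  define R where "R = rise_right l 0"
  define S where "S = (\<Sum>k\<le>R. rise_left l (int k))"
  have "signature x = (S, map (\<lambda>k. l (int k - int S)) [0..<S + R + 1],
      map (\<lambda>k. map (bits x (int k)) [0..<l 0]) [0..<R + 1])"
    unfolding signature_def Let_def l_def R_def S_def ..
  with assms(3) have levels_eq: "\<And>k. k < S + R + 1 \<Longrightarrow> levels y (int k - int S) = l (int k - int S)"
    and bits_eq: "\<And>k j. k < R + 1 \<Longrightarrow> j < l 0 \<Longrightarrow> bits y (int k) j = bits x (int k) j"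
    by (auto simp: mem_cylinder_iff[OF y] simp del: upt_Suc)
  have "code (levels y) (bits y) 0 = code l (bits x) 0"
  proof (rule code_local)
    show "unbounded_both_ways l" unfolding l_def by (rule unbounded_levels[OF x])
    fix i assume "- int (\<Sum>k\<le>rise_right l 0. rise_left l (int k)) \<le> i" "i \<le> int (rise_right l 0)"
    then have "- int S \<le> i" "i \<le> int R" unfolding S_def R_def by simp_all
    then have "nat (i + int S) < S + R + 1" "int (nat (i + int S)) - int S = i" by auto
    then show "levels y i = l i" using levels_eq by metis
  next
    fix i j assume "0 \<le> i" "i \<le> int (rise_right l 0)" "j < l 0"
    then show "bits y i j = bits x i j" using bits_eq[of "nat i" j] unfolding R_def by simp
  qed
  then show ?thesis unfolding label_def l_def using x y by simp
qed

lemma label_measurable: "label \<in> measurable M (count_space UNIV)"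
  unfolding measurable_count_space_eq2_countable
proof (intro conjI ballI)
  fix v :: nat
  define Q where "Q = {c. \<exists>x\<in>regular. signature x = c \<and> label x = v}"
  have "label -` {v} \<inter> regular = regular \<inter> (\<Union>c\<in>Q. cylinder c)"
  proof (intro equalityI subsetI)
    fix x assume x: "x \<in> label -` {v} \<inter> regular"
    then have "signature x \<in> Q" unfolding Q_def by auto
    with x show "x \<in> regular \<inter> (\<Union>c\<in>Q. cylinder c)"
      using mem_cylinder_signature by blast
  next
    fix y assume "y \<in> regular \<inter> (\<Union>c\<in>Q. cylinder c)"
    then obtain x where "x \<in> regular" "label x = v" "y \<in> regular" "y \<in> cylinder (signature x)"
      unfolding Q_def by auto
    then show "y \<in> label -` {v} \<inter> regular"
      using label_eq_if_mem_cylinder_signature by simp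
  qed
  moreover have "(\<Union>c\<in>Q. cylinder c) \<in> sets M"
    by (rule sets.countable_UN'[OF countableI_type]) (use sets_cylinder in blast)
  ultimately have regular_part: "label -` {v} \<inter> regular \<in> sets M" using sets_regular by simp
  have "label -` {v} - regular \<subseteq> - regular" by blast
  then have null_part: "label -` {v} - regular \<in> sets M"
    by (rule null_setsD2[OF null_sets_subset[OF _ null_sets_compl_regular]])
  have "label -` {v} \<inter> space M = (label -` {v} \<inter> regular) \<union> (label -` {v} - regular)"
    by auto
  also have "\<dots> \<in> sets M" by (rule sets.Un[OF regular_part null_part])
  finally show "label -` {v} \<inter> space M \<in> sets M" .
qed simp

lemma label_inv_funpow:
  assumes "x \<in> regular"
  shows "label ((inv T ^^ m) x) = code (levels x) (bits x) (- int m)"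
  using label_tpow[OF assms, of "- int m"] by (simp add: tpow_neg_of_nat)

lemma label_determined_by_past:
  "\<exists>F :: nat list \<Rightarrow> nat. AE \<omega> in M. label (inv T \<omega>) = n \<longrightarrow>
     label \<omega> = F (map (\<lambda>j. label ((inv T ^^ (n - j)) \<omega>)) [0..<n])"
proof -
  define past where "past \<omega> = map (\<lambda>j. label ((inv T ^^ (n - j)) \<omega>)) [0..<n]" for \<omega>
  define F where "F w = (SOME v. \<exists>\<omega>\<in>regular. past \<omega> = w \<and> label \<omega> = v)" for w
  have "label \<omega> = F (past \<omega>)" if \<omega>: "\<omega> \<in> regular" and n: "label (inv T \<omega>) = n" for \<omega>
  proof -
    have "\<exists>\<omega>'\<in>regular. past \<omega>' = past \<omega> \<and> label \<omega>' = F (past \<omega>)"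
      unfolding F_def by (rule someI_ex) (use \<omega> in blast)
    then obtain \<omega>' where \<omega>': "\<omega>' \<in> regular" "past \<omega>' = past \<omega>" "label \<omega>' = F (past \<omega>)"
      by blast
    have "code (levels \<omega>') (bits \<omega>') 0 = code (levels \<omega>) (bits \<omega>) 0"
    proof (rule code_determined_by_past[OF unbounded_levels[OF \<omega>]])
      show "n = code (levels \<omega>) (bits \<omega>) (-1)"
        using n label_inv_funpow[OF \<omega>, of 1] by simp
      fix i assume "- int n \<le> i" "i \<le> -1"
      define j where "j = nat (i + int n)"
      have j: "j < n" "i = - int (n - j)" using \<open>- int n \<le> i\<close> \<open>i \<le> -1\<close> unfolding j_def by auto
      have "past \<omega>' ! j = past \<omega> ! j" using \<omega>'(2) by simp
      then show "code (levels \<omega>') (bits \<omega>') i = code (levels \<omega>) (bits \<omega>) i"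
        using j label_inv_funpow[OF \<omega>] label_inv_funpow[OF \<omega>'(1)] unfolding past_def by simp
    qed
    then show ?thesis using \<omega> \<omega>' unfolding label_def by simp
  qed
  then have "AE \<omega> in M. label (inv T \<omega>) = n \<longrightarrow> label \<omega> = F (past \<omega>)"
    by (intro AE_I'[OF null_sets_compl_regular]) auto
  then show ?thesis unfolding past_def by blast
qed

end

theorem mainTheorem1:
  fixes M :: "'a::polish_space measure" and T :: "'a \<Rightarrow> 'a"
  assumes "lebesgue_prob_space M"
    and "non_periodic M T"
  shows "\<exists>h :: 'a \<Rightarrow> nat.
           h \<in> measurable M (count_space UNIV) \<and>
           (\<forall>\<omega>. h \<omega> \<ge> 1) \<and>
           generates M T h \<and>
           (\<forall>n::nat. n \<ge> 1 \<longrightarrow>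
              (\<exists>F :: nat list \<Rightarrow> nat.
                 AE \<omega> in M. h (inv T \<omega>) = n \<longrightarrow>
                   h \<omega> = F (map (\<lambda>j. h ((inv T ^^ (n - j)) \<omega>)) [0..<n])))"
proof -
  interpret nonperiodic_system M T using assms by (rule nonperiodic_system.intro)
  show ?thesis
    using label_measurable label_pos label_generates label_determined_by_past by blast
qed

end
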